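(* Let $p\geq 1$ be an integer, $\alpha>0$, and let $\lambda\in\mathbb{C}$, $\lambda\neq 0$. Consider an explicit time-marching scheme whose stability region contains the real segment $[-C,0]$, where $C>0$ is the largest value such that the scheme applied to $dy/dt=\mu y$ with real $\mu<0$ is stable whenever $|\mu\Delta t|\leq C$. If $\alpha\geq\alpha_{\min}=(2^p-1)/C$, then the explicit time integration of $dy/dt=T^{(p)}_{\lambda}(\alpha,\Delta t)\,\lambda\, y$ with this scheme remains stable in the limit of very large time steps: the modified dimensionless eigenvalue satisfies $$\left(T^{(p)}_\lambda(\alpha,\Delta t)\lambda\right)\Delta t=-\frac{2^p-1}{\alpha}+\mathcal{O}(\Delta t^{-1})\quad(\Delta t\to\infty),$$ so that in this limit $-C\leq \left(T^{(p)}_\lambda(\alpha,\Delta t)\lambda\right)\Delta t<0$ lies on the negative real axis within the stability region of the scheme.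
   Context: For $\Delta t>0$, $\alpha>0$ and $\lambda\in\mathbb{C}$ (whenever the inverses exist), the TASE operator of order $p$ is defined recursively by $T^{(1)}_\lambda(\alpha,\Delta t)=(1-\alpha\Delta t\lambda)^{-1}$ and, for $p\geq 2$, $$T^{(p)}_\lambda(\alpha,\Delta t)=\frac{2^{p-1}T^{(p-1)}_\lambda(\alpha/2,\Delta t)-T^{(p-1)}_\lambda(\alpha,\Delta t)}{2^{p-1}-1}.$$ Equivalently $T^{(p)}_\lambda(\alpha,\Delta t)=\sum_{k=0}^{p-1}\beta_{p,k}(2^k-\alpha\Delta t\lambda)^{-1}$ for suitable rational constants $\beta_{p,k}$. The stability region of an explicit scheme is the set of $z=\mu\Delta t\in\mathbb{C}$ for which the scheme applied to $dy/dt=\mu y$ has amplification factor of modulus at most $1$. *)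

theory Defs
  imports "HOL-Analysis.Analysis" "HOL-Computational_Algebra.Polynomial" "HOL-Library.Landau_Symbols"
begin

text \<open>TASE operator of order p (p >= 1), arguments: alpha, Delta t, lambda.
  Order 0 is not used (set to 0). Division by zero yields 0 by HOL convention,
  which only matters at finitely many Delta t.\<close>
fun tase :: "nat \<Rightarrow> real \<Rightarrow> real \<Rightarrow> complex \<Rightarrow> complex" where
  "tase 0 a dt l = 0"
| "tase (Suc 0) a dt l = inverse (1 - complex_of_real (a * dt) * l)"
| "tase (Suc (Suc n)) a dt l =
     (2 ^ (Suc n) * tase (Suc n) (a / 2) dt l - tase (Suc n) a dt l) / (2 ^ (Suc n) - 1)"

text \<open>Stability region of an explicit one-step scheme with amplification factor R
  (R z is the factor for dy/dt = mu y with z = mu * Delta t).\<close>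
definition stability_region :: "(complex \<Rightarrow> complex) \<Rightarrow> complex set" where
  "stability_region R = {z. cmod (R z) \<le> 1}"

end

theory Submission
  imports Defs
begin

text \<open>
  Let \<open>E\<^sub>p(\<alpha>, \<Delta>t) = T\<^sub>p \<lambda> \<Delta>t + (2\<^sup>p - 1)/\<alpha>\<close> be the deviation of the modified
  eigenvalue from its claimed limit. For \<open>p = 1\<close> it equals \<open>1/(\<alpha>(1 - \<alpha>\<Delta>t\<lambda>)) = O(1/\<Delta>t)\<close>.
  The constants \<open>(2\<^sup>p - 1)/\<alpha>\<close> are exactly those that cancel in the recursion defining
  \<open>T\<^sub>p\<^sub>+\<^sub>1\<close>, so \<open>E\<^sub>p\<^sub>+\<^sub>1(\<alpha>)\<close> is a fixed linear combination of \<open>E\<^sub>p(\<alpha>/2)\<close> and \<open>E\<^sub>p(\<alpha>)\<close>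
  and stays \<open>O(1/\<Delta>t)\<close>.
\<close>

lemma two_power_minus_one_neq_zero:
  assumes "p \<ge> 1"
  shows "(2 :: 'a :: ring_char_0) ^ p - 1 \<noteq> 0"
proof -
  have "(2 :: nat) ^ p \<noteq> 1"
    using assms by simp
  then show ?thesis
    by (metis of_nat_eq_1_iff of_nat_numeral of_nat_power right_minus_eq)
qed

definition tase_error :: "nat \<Rightarrow> real \<Rightarrow> complex \<Rightarrow> real \<Rightarrow> complex" where
  "tase_error p a l dt = tase p a dt l * l * of_real dt + of_real ((2 ^ p - 1) / a)"

lemma tase_error_one:
  assumes "a \<noteq> 0" and "1 - of_real (a * dt) * l \<noteq> 0"
  shows "tase_error 1 a l dt = 1 / (of_real a * (1 - of_real (a * dt) * l))"
  using assms by (simp add: tase_error_def numeral_eq_Suc field_simps)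

lemma tase_error_Suc:
  assumes "p \<ge> 1" and "a \<noteq> 0"
  shows "tase_error (Suc p) a l dt
    = (2 ^ p * tase_error p (a / 2) l dt - tase_error p a l dt) / (2 ^ p - 1)"
proof -
  define Q :: complex where "Q = 2 ^ p"
  define A where "A = tase p (a / 2) dt l"
  define B where "B = tase p a dt l"
  have Q: "Q - 1 \<noteq> 0"
    unfolding Q_def using assms(1) by (rule two_power_minus_one_neq_zero)
  have "tase (Suc p) a dt l = (Q * A - B) / (Q - 1)"
    using assms(1) by (cases p) (simp_all add: Q_def A_def B_def)
  moreover have "(Q * A - B) / (Q - 1) * l * d + (2 * Q - 1) / a
      = (Q * (A * l * d + (Q - 1) / (a / 2)) - (B * l * d + (Q - 1) / a)) / (Q - 1)" for d
    using Q assms(2) by (simp add: field_simps)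
  ultimately show ?thesis
    by (simp add: tase_error_def Q_def A_def B_def)
qed

lemma bigo_imp_tendsto_zero:
  fixes f g :: "'a \<Rightarrow> 'b :: real_normed_field"
  assumes "f \<in> O[F](g)" and "(g \<longlongrightarrow> 0) F"
  shows "(f \<longlongrightarrow> 0) F"
proof -
  obtain c where "eventually (\<lambda>x. norm (f x) \<le> c * norm (g x)) F"
    using assms(1) by (elim landau_o.bigE)
  moreover have "((\<lambda>x. c * norm (g x)) \<longlongrightarrow> 0) F"
    using tendsto_mult_right_zero[OF tendsto_norm_zero[OF assms(2)]] .
  ultimately show ?thesis
    by (rule Lim_null_comparison)
qed

lemma tendsto_of_real_one_over_at_top:
  "((\<lambda>x. of_real (1 / x) :: 'a :: real_normed_algebra_1) \<longlongrightarrow> 0) at_top"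
proof -
  have "((\<lambda>x :: real. 1 / x) \<longlongrightarrow> 0) at_top"
    using tendsto_divide_0[OF tendsto_const filterlim_at_top_imp_at_infinity[OF filterlim_ident]] .
  then show ?thesis
    using tendsto_of_real by fastforce
qed

lemma tase_error_one_bigo:
  assumes "a \<noteq> 0" and "l \<noteq> 0"
  shows "tase_error 1 a l \<in> O[at_top](\<lambda>dt. of_real (1 / dt))"
proof (rule bigoI_tendsto)
  define u where "u dt = of_real (1 / dt) - of_real a * l" for dt :: real
  have "(u \<longlongrightarrow> 0 - of_real a * l) at_top"
    unfolding u_def by (intro tendsto_diff tendsto_of_real_one_over_at_top tendsto_const)
  then have u_lim: "(u \<longlongrightarrow> - of_real a * l) at_top"
    by simp
  have u_nonzero: "eventually (\<lambda>dt. dt > 0 \<and> u dt \<noteq> 0) at_top"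
    using eventually_gt_at_top[of 0] tendsto_imp_eventually_ne[OF u_lim] assms
    by (auto intro: eventually_conj)
  then show "eventually (\<lambda>dt. of_real (1 / dt) \<noteq> (0 :: complex)) at_top"
    by eventually_elim simp
  have "eventually (\<lambda>dt. tase_error 1 a l dt / of_real (1 / dt) = 1 / (of_real a * u dt)) at_top"
    using u_nonzero
  proof eventually_elim
    case (elim dt)
    then have factor: "1 - of_real (a * dt) * l = of_real dt * u dt"
      by (simp add: u_def field_simps)
    with elim have nonzero: "1 - of_real (a * dt) * l \<noteq> 0"
      by simp
    with elim show ?case
      unfolding tase_error_one[OF assms(1) nonzero] factor by simp
  qed
  moreover have "((\<lambda>dt. 1 / (of_real a * u dt)) \<longlongrightarrow> 1 / (of_real a * (- of_real a * l))) at_top"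
    using u_lim assms by (auto intro!: tendsto_eq_intros)
  ultimately show "((\<lambda>dt. tase_error 1 a l dt / of_real (1 / dt))
      \<longlongrightarrow> 1 / (of_real a * (- of_real a * l))) at_top"
    by (rule tendsto_cong[THEN iffD2])
qed

lemma tase_error_bigo:
  assumes "p \<ge> 1" and "a \<noteq> 0" and "l \<noteq> 0"
  shows "tase_error p a l \<in> O[at_top](\<lambda>dt. of_real (1 / dt))"
  using assms(1,2)
proof (induction p arbitrary: a rule: nat_induct_at_least)
  case base
  then show ?case using tase_error_one_bigo assms(3) by simp
next
  case (Suc p)
  have "(2 :: complex) ^ p - 1 \<noteq> 0"
    using Suc.hyps by (rule two_power_minus_one_neq_zero)
  moreover have "tase_error p (a / 2) l \<in> O[at_top](\<lambda>dt. of_real (1 / dt))"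
    and "tase_error p a l \<in> O[at_top](\<lambda>dt. of_real (1 / dt))"
    using Suc by simp_all
  ultimately have "(\<lambda>dt. (2 ^ p * tase_error p (a / 2) l dt - tase_error p a l dt) / (2 ^ p - 1))
      \<in> O[at_top](\<lambda>dt. of_real (1 / dt))"
    by (auto intro!: sum_in_bigo)
  then show ?case
    using tase_error_Suc[OF Suc.hyps Suc.prems] by simp
qed

theorem theorem1:
  fixes p :: nat and alpha C :: real and lam :: complex and R :: "complex \<Rightarrow> complex"
  assumes p: "p \<ge> 1"
    and alpha_pos: "alpha > 0"
    and lam: "lam \<noteq> 0"
    and explicit: "\<exists>P. R = poly P"
    and C_pos: "C > 0"
    and seg: "\<forall>x\<in>{-C..0}. complex_of_real x \<in> stability_region R"
    and C_largest: "\<forall>c>C. \<not> (\<forall>x\<in>{-c..<0}. complex_of_real x \<in> stability_region R)"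
    and alpha_min: "alpha \<ge> (2 ^ p - 1) / C"
  shows "(\<lambda>dt. tase p alpha dt lam * lam * complex_of_real dt - complex_of_real (- (2 ^ p - 1) / alpha))
           \<in> O[at_top](\<lambda>dt. complex_of_real (1 / dt))
    \<and> ((\<lambda>dt. tase p alpha dt lam * lam * complex_of_real dt)
           \<longlongrightarrow> complex_of_real (- (2 ^ p - 1) / alpha)) at_top
    \<and> - C \<le> - (2 ^ p - 1) / alpha \<and> - (2 ^ p - 1) / alpha < 0
    \<and> complex_of_real (- (2 ^ p - 1) / alpha) \<in> stability_region R"
proof -
  have error: "(\<lambda>dt. tase p alpha dt lam * lam * complex_of_real dt - complex_of_real (- (2 ^ p - 1) / alpha))
      = tase_error p alpha lam"
    using alpha_pos by (simp add: fun_eq_iff tase_error_def field_simps)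
  have bigo: "tase_error p alpha lam \<in> O[at_top](\<lambda>dt. complex_of_real (1 / dt))"
    using tase_error_bigo p alpha_pos lam by simp
  then have "(tase_error p alpha lam \<longlongrightarrow> 0) at_top"
    using bigo_imp_tendsto_zero tendsto_of_real_one_over_at_top by blast
  then have lim: "((\<lambda>dt. tase p alpha dt lam * lam * complex_of_real dt)
      \<longlongrightarrow> complex_of_real (- (2 ^ p - 1) / alpha)) at_top"
    by (subst Lim_null) (simp only: error)
  have "(1 :: real) < 2 ^ p"
    using p by (intro one_less_power) auto
  then have neg: "- (2 ^ p - 1) / alpha < 0"
    using alpha_pos by (simp add: divide_neg_pos)
  have ge: "- C \<le> - (2 ^ p - 1) / alpha"
    using alpha_min alpha_pos C_pos by (simp add: field_simps)
  with neg have "- (2 ^ p - 1) / alpha \<in> {-C..0}"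
    by simp
  with seg have "complex_of_real (- (2 ^ p - 1) / alpha) \<in> stability_region R"
    by blast
  with bigo lim neg ge show ?thesis
    unfolding error by blast
qed

end
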